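(* For every finite partial IP loop $P$ there exists a finite partial IP loop $Q$ with $P\le Q$ and $3\mid o_3(Q)$.
   Context: A partial IP loop is a set $P$ with a partial binary operation $(x,y)\mapsto xy$ defined on a subset $D(P)\subseteq P\times P$ (the domain) such that: (1) there is $1\in P$ with $(1,x),(x,1)\in D(P)$ and $1x=x1=x$ for all $x\in P$; (2) for each $x\in P$ there is a unique $y\in P$, denoted $x^{-1}$, with $(x,y),(y,x)\in D(P)$ and $xy=yx=1$; (3) whenever $(x,y)\in D(P)$, we have $(x^{-1},xy),(xy,y^{-1})\in D(P)$ and $x^{-1}(xy)=y$, $(xy)y^{-1}=x$. A partial IP loop $(Q,* )$ extends $(P,\cdot)$ (written $P\le Q$) if $P\subseteq Q$, $D(P)\subseteq D(Q)$ and $x\cdot y=x*y$ for all $(x,y)\in D(P)$. $O_3(P)=\{x\in P: (x,x)\in D(P),\ (x,xx)\in D(P),\ x\neq 1,\ x(xx)=1\}$ and $o_3(P)=\#O_3(P)$. *)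

theory Defs
  imports Main
begin

text \<open>A partial IP loop is given by a carrier S, a domain D \<subseteq> S \<times> S of the partial
operation, the operation f (only its values on D matter) and the identity e.\<close>

definition pinv :: "'a set \<Rightarrow> ('a \<times> 'a) set \<Rightarrow> ('a \<Rightarrow> 'a \<Rightarrow> 'a) \<Rightarrow> 'a \<Rightarrow> 'a \<Rightarrow> 'a" where
  "pinv S D f e x = (THE y. y \<in> S \<and> (x, y) \<in> D \<and> (y, x) \<in> D \<and> f x y = e \<and> f y x = e)"

definition partial_ip_loop :: "'a set \<Rightarrow> ('a \<times> 'a) set \<Rightarrow> ('a \<Rightarrow> 'a \<Rightarrow> 'a) \<Rightarrow> 'a \<Rightarrow> bool" where
  "partial_ip_loop S D f e \<longleftrightarrow>
     D \<subseteq> S \<times> S \<and> (\<forall>(x, y) \<in> D. f x y \<in> S) \<and>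
     e \<in> S \<and>
     (\<forall>x\<in>S. (e, x) \<in> D \<and> (x, e) \<in> D \<and> f e x = x \<and> f x e = x) \<and>
     (\<forall>x\<in>S. \<exists>!y. y \<in> S \<and> (x, y) \<in> D \<and> (y, x) \<in> D \<and> f x y = e \<and> f y x = e) \<and>
     (\<forall>(x, y) \<in> D.
        (pinv S D f e x, f x y) \<in> D \<and> (f x y, pinv S D f e y) \<in> D \<and>
        f (pinv S D f e x) (f x y) = y \<and> f (f x y) (pinv S D f e y) = x)"

definition pextends ::
  "'a set \<Rightarrow> ('a \<times> 'a) set \<Rightarrow> ('a \<Rightarrow> 'a \<Rightarrow> 'a) \<Rightarrow>
   'a set \<Rightarrow> ('a \<times> 'a) set \<Rightarrow> ('a \<Rightarrow> 'a \<Rightarrow> 'a) \<Rightarrow> bool" where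
  "pextends S D f S' D' f' \<longleftrightarrow> S \<subseteq> S' \<and> D \<subseteq> D' \<and> (\<forall>(x, y) \<in> D. f x y = f' x y)"

definition O3 :: "'a set \<Rightarrow> ('a \<times> 'a) set \<Rightarrow> ('a \<Rightarrow> 'a \<Rightarrow> 'a) \<Rightarrow> 'a \<Rightarrow> 'a set" where
  "O3 S D f e = {x \<in> S. (x, x) \<in> D \<and> (x, f x x) \<in> D \<and> x \<noteq> e \<and> f x (f x x) = e}"

definition o3 :: "'a set \<Rightarrow> ('a \<times> 'a) set \<Rightarrow> ('a \<Rightarrow> 'a \<Rightarrow> 'a) \<Rightarrow> 'a \<Rightarrow> nat" where
  "o3 S D f e = card (O3 S D f e)"

text \<open>Copy of a structure on 'a inside the type 'a + nat via Inl.\<close>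
definition lift_dom :: "('a \<times> 'a) set \<Rightarrow> (('a + 'b) \<times> ('a + 'b)) set" where
  "lift_dom D = (\<lambda>(x, y). (Inl x, Inl y)) ` D"

definition lift_op :: "('a \<Rightarrow> 'a \<Rightarrow> 'a) \<Rightarrow> ('a + 'b) \<Rightarrow> ('a + 'b) \<Rightarrow> ('a + 'b)" where
  "lift_op f a b = Inl (f (projl a) (projl b))"

end

theory Submission
  imports Defs
begin

text \<open>Adjoin to P the disjoint union of k cyclic groups of order 3, glued to P at the
identity and with no products between distinct components. Each copy contributes exactly
two elements of order 3 and leaves O3(P) unchanged, so choosing k \<equiv> o3(P) mod 3 gives
o3(Q) = o3(P) + 2k \<equiv> 0 mod 3.\<close>

lemma pinv_spec:
  assumes "partial_ip_loop S D f e" "x \<in> S"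
  shows "pinv S D f e x \<in> S \<and> (x, pinv S D f e x) \<in> D \<and> (pinv S D f e x, x) \<in> D
         \<and> f x (pinv S D f e x) = e \<and> f (pinv S D f e x) x = e"
proof -
  have "\<exists>!y. y \<in> S \<and> (x, y) \<in> D \<and> (y, x) \<in> D \<and> f x y = e \<and> f y x = e"
    using assms unfolding partial_ip_loop_def by blast
  then show ?thesis unfolding pinv_def by (rule theI')
qed

lemma pinv_eqI:
  assumes "partial_ip_loop S D f e" "x \<in> S" "y \<in> S" "(x, y) \<in> D" "(y, x) \<in> D" "f x y = e" "f y x = e"
  shows "pinv S D f e x = y"
proof -
  have "\<exists>!y. y \<in> S \<and> (x, y) \<in> D \<and> (y, x) \<in> D \<and> f x y = e \<and> f y x = e"
    using assms unfolding partial_ip_loop_def by blast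
  then show ?thesis unfolding pinv_def using assms by (intro the1_equality) auto
qed

lemma pinv_identity:
  assumes "partial_ip_loop S D f e"
  shows "pinv S D f e e = e"
proof -
  have "e \<in> S" "(e, e) \<in> D" "f e e = e"
    using assms unfolding partial_ip_loop_def by auto
  then show ?thesis using pinv_eqI[OF assms] by blast
qed

lemma partial_ip_loopI:
  assumes "D \<subseteq> S \<times> S" "\<forall>(x, y) \<in> D. f x y \<in> S" "e \<in> S"
    and "\<forall>x\<in>S. (e, x) \<in> D \<and> (x, e) \<in> D \<and> f e x = x \<and> f x e = x"
    and inv: "\<forall>x\<in>S. g x \<in> S \<and> (x, g x) \<in> D \<and> (g x, x) \<in> D \<and> f x (g x) = e \<and> f (g x) x = e"
    and inv_unique: "\<forall>x\<in>S. \<forall>y\<in>S. (x, y) \<in> D \<and> (y, x) \<in> D \<and> f x y = e \<and> f y x = e \<longrightarrow> y = g x"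
    and cancel: "\<forall>(x, y) \<in> D. (g x, f x y) \<in> D \<and> (f x y, g y) \<in> D \<and>
        f (g x) (f x y) = y \<and> f (f x y) (g y) = x"
  shows "partial_ip_loop S D f e"
proof -
  have pinv_g: "pinv S D f e x = g x" if "x \<in> S" for x
    unfolding pinv_def using that inv inv_unique by (intro the_equality) auto
  have "\<forall>x\<in>S. \<exists>!y. y \<in> S \<and> (x, y) \<in> D \<and> (y, x) \<in> D \<and> f x y = e \<and> f y x = e"
    using inv inv_unique by metis
  moreover have "\<forall>(x, y) \<in> D. (pinv S D f e x, f x y) \<in> D \<and> (f x y, pinv S D f e y) \<in> D \<and>
        f (pinv S D f e x) (f x y) = y \<and> f (f x y) (pinv S D f e y) = x"
  proof (clarify)
    fix x y assume "(x, y) \<in> D"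
    moreover from this \<open>D \<subseteq> S \<times> S\<close> have "x \<in> S" "y \<in> S" by auto
    ultimately show "(pinv S D f e x, f x y) \<in> D \<and> (f x y, pinv S D f e y) \<in> D \<and>
        f (pinv S D f e x) (f x y) = y \<and> f (f x y) (pinv S D f e y) = x"
      using cancel pinv_g by fastforce
  qed
  ultimately show ?thesis
    using assms unfolding partial_ip_loop_def by blast
qed

text \<open>Inr (2i) and Inr (2i + 1) are the two generators a and a\<cdot>a of the i-th adjoined cyclic group.\<close>

definition partner :: "nat \<Rightarrow> nat" where
  "partner j = (if even j then Suc j else j - 1)"

lemma partner_partner [simp]: "partner (partner j) = j"
  unfolding partner_def by auto

lemma partner_neq [simp]: "partner j \<noteq> j" "j \<noteq> partner j"
  unfolding partner_def by auto presburger+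

lemma partner_lessThan_even: "j < 2 * k \<Longrightarrow> partner j < 2 * k"
  unfolding partner_def by auto

fun adjoin_op :: "('a \<Rightarrow> 'a \<Rightarrow> 'a) \<Rightarrow> 'a \<Rightarrow> ('a + nat) \<Rightarrow> ('a + nat) \<Rightarrow> ('a + nat)" where
  "adjoin_op f e (Inl x) (Inl y) = Inl (f x y)"
| "adjoin_op f e (Inl x) (Inr j) = Inr j"
| "adjoin_op f e (Inr j) (Inl x) = Inr j"
| "adjoin_op f e (Inr i) (Inr j) = (if i = j then Inr (partner j) else Inl e)"

fun adjoin_inv :: "('a \<Rightarrow> 'a) \<Rightarrow> ('a + nat) \<Rightarrow> ('a + nat)" where
  "adjoin_inv i (Inl x) = Inl (i x)"
| "adjoin_inv i (Inr j) = Inr (partner j)"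

definition adjoin_dom :: "('a \<times> 'a) set \<Rightarrow> 'a \<Rightarrow> nat set \<Rightarrow> (('a + nat) \<times> ('a + nat)) set" where
  "adjoin_dom D e N = lift_dom D \<union> (\<lambda>j. (Inl e, Inr j)) ` N \<union> (\<lambda>j. (Inr j, Inl e)) ` N
     \<union> (\<lambda>j. (Inr j, Inr j)) ` N \<union> (\<lambda>j. (Inr j, Inr (partner j))) ` N"

lemma mem_adjoin_dom:
  "(a, b) \<in> adjoin_dom D e N \<longleftrightarrow>
    (\<exists>x y. a = Inl x \<and> b = Inl y \<and> (x, y) \<in> D) \<or>
    (\<exists>j\<in>N. (a = Inl e \<and> b = Inr j) \<or> (a = Inr j \<and> b = Inl e) \<or> (a = Inr j \<and> b = Inr j)
       \<or> (a = Inr j \<and> b = Inr (partner j)))"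
  unfolding adjoin_dom_def lift_dom_def by auto

lemma adjoin_inv_unique:
  assumes P: "partial_ip_loop S D f e"
    and "x \<in> Inl ` S \<union> Inr ` N" "y \<in> Inl ` S \<union> Inr ` N"
    and "(x, y) \<in> adjoin_dom D e N" "(y, x) \<in> adjoin_dom D e N"
    and "adjoin_op f e x y = Inl e" "adjoin_op f e y x = Inl e"
  shows "y = adjoin_inv (pinv S D f e) x"
proof (cases x)
  case (Inl a)
  show ?thesis
  proof (cases y)
    case (Inl b)
    with assms \<open>x = Inl a\<close> have "pinv S D f e a = b"
      by (intro pinv_eqI[OF P]) (auto simp: mem_adjoin_dom)
    with \<open>x = Inl a\<close> \<open>y = Inl b\<close> show ?thesis by simp
  next
    case Inr
    with assms \<open>x = Inl a\<close> show ?thesis by auto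
  qed
next
  case Inr
  with assms show ?thesis by (cases y) (auto simp: mem_adjoin_dom split: if_splits)
qed

lemma adjoin_cancel:
  assumes P: "partial_ip_loop S D f e" and N: "partner ` N \<subseteq> N"
    and ab: "(a, b) \<in> adjoin_dom D e N"
  defines "g \<equiv> adjoin_inv (pinv S D f e)" and "h \<equiv> adjoin_op f e"
  shows "(g a, h a b) \<in> adjoin_dom D e N \<and> (h a b, g b) \<in> adjoin_dom D e N \<and>
         h (g a) (h a b) = b \<and> h (h a b) (g b) = a"
proof -
  have cancel: "\<forall>(x, y) \<in> D. (pinv S D f e x, f x y) \<in> D \<and> (f x y, pinv S D f e y) \<in> D \<and>
        f (pinv S D f e x) (f x y) = y \<and> f (f x y) (pinv S D f e y) = x"
    using P unfolding partial_ip_loop_def by blast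
  have N': "\<And>j. j \<in> N \<Longrightarrow> partner j \<in> N" using N by auto
  from ab consider (old) x y where "a = Inl x" "b = Inl y" "(x, y) \<in> D"
    | (new) j where "j \<in> N" "a = Inl e \<and> b = Inr j \<or> a = Inr j \<and> b = Inl e
        \<or> a = Inr j \<and> b = Inr j \<or> a = Inr j \<and> b = Inr (partner j)"
    unfolding mem_adjoin_dom by blast
  then show ?thesis
  proof cases
    case old
    then show ?thesis using cancel unfolding g_def h_def by (auto simp: mem_adjoin_dom)
  next
    case new
    then show ?thesis
      using N' pinv_identity[OF P] unfolding g_def h_def by (auto simp: mem_adjoin_dom)
  qed
qed

lemma partial_ip_loop_adjoin:
  assumes P: "partial_ip_loop S D f e" and N: "partner ` N \<subseteq> N"
  shows "partial_ip_loop (Inl ` S \<union> Inr ` N) (adjoin_dom D e N) (adjoin_op f e) (Inl e)"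
proof (rule partial_ip_loopI[where g = "adjoin_inv (pinv S D f e)"])
  have DS: "\<And>x y. (x, y) \<in> D \<Longrightarrow> x \<in> S \<and> y \<in> S"
    and closed: "\<And>x y. (x, y) \<in> D \<Longrightarrow> f x y \<in> S" and eS: "e \<in> S"
    and unit: "\<forall>x\<in>S. (e, x) \<in> D \<and> (x, e) \<in> D \<and> f e x = x \<and> f x e = x"
    using P unfolding partial_ip_loop_def by auto
  have N': "\<And>j. j \<in> N \<Longrightarrow> partner j \<in> N" using N by auto
  show "adjoin_dom D e N \<subseteq> (Inl ` S \<union> Inr ` N) \<times> (Inl ` S \<union> Inr ` N)"
    using DS eS N' by (auto simp: mem_adjoin_dom)
  show "\<forall>(x, y) \<in> adjoin_dom D e N. adjoin_op f e x y \<in> Inl ` S \<union> Inr ` N"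
    using closed eS N' by (auto simp: mem_adjoin_dom)
  show "Inl e \<in> Inl ` S \<union> Inr ` N" using eS by auto
  show "\<forall>x\<in>Inl ` S \<union> Inr ` N. (Inl e, x) \<in> adjoin_dom D e N \<and> (x, Inl e) \<in> adjoin_dom D e N
          \<and> adjoin_op f e (Inl e) x = x \<and> adjoin_op f e x (Inl e) = x"
    using unit by (auto simp: mem_adjoin_dom)
  show "\<forall>x\<in>Inl ` S \<union> Inr ` N. adjoin_inv (pinv S D f e) x \<in> Inl ` S \<union> Inr ` N
          \<and> (x, adjoin_inv (pinv S D f e) x) \<in> adjoin_dom D e N
          \<and> (adjoin_inv (pinv S D f e) x, x) \<in> adjoin_dom D e N
          \<and> adjoin_op f e x (adjoin_inv (pinv S D f e) x) = Inl e
          \<and> adjoin_op f e (adjoin_inv (pinv S D f e) x) x = Inl e"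
    using pinv_spec[OF P] N' by (auto simp: mem_adjoin_dom)
  show "\<forall>x\<in>Inl ` S \<union> Inr ` N. \<forall>y\<in>Inl ` S \<union> Inr ` N.
          (x, y) \<in> adjoin_dom D e N \<and> (y, x) \<in> adjoin_dom D e N
          \<and> adjoin_op f e x y = Inl e \<and> adjoin_op f e y x = Inl e
          \<longrightarrow> y = adjoin_inv (pinv S D f e) x"
    using adjoin_inv_unique[OF P] by blast
  show "\<forall>(x, y) \<in> adjoin_dom D e N.
          (adjoin_inv (pinv S D f e) x, adjoin_op f e x y) \<in> adjoin_dom D e N
          \<and> (adjoin_op f e x y, adjoin_inv (pinv S D f e) y) \<in> adjoin_dom D e N
          \<and> adjoin_op f e (adjoin_inv (pinv S D f e) x) (adjoin_op f e x y) = y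
          \<and> adjoin_op f e (adjoin_op f e x y) (adjoin_inv (pinv S D f e) y) = x"
    using adjoin_cancel[OF P N] by blast
qed

lemma O3_adjoin:
  assumes "partial_ip_loop S D f e" "partner ` N \<subseteq> N"
  shows "O3 (Inl ` S \<union> Inr ` N) (adjoin_dom D e N) (adjoin_op f e) (Inl e)
       = Inl ` O3 S D f e \<union> Inr ` N"
proof -
  have "D \<subseteq> S \<times> S" using assms(1) unfolding partial_ip_loop_def by blast
  with assms(2) show ?thesis unfolding O3_def by (auto simp: mem_adjoin_dom)
qed

lemma pextends_adjoin:
  "pextends (Inl ` S) (lift_dom D) (lift_op f) (Inl ` S \<union> Inr ` N) (adjoin_dom D e N) (adjoin_op f e)"
  unfolding pextends_def adjoin_dom_def lift_dom_def lift_op_def by auto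

theorem proposition1:
  fixes S :: "'a set" and D :: "('a \<times> 'a) set" and f :: "'a \<Rightarrow> 'a \<Rightarrow> 'a" and e :: 'a
  assumes "partial_ip_loop S D f e" and "finite S"
  shows "\<exists>(S' :: ('a + nat) set) D' f' e'.
           partial_ip_loop S' D' f' e' \<and> finite S' \<and>
           pextends (Inl ` S) (lift_dom D) (lift_op f) S' D' f' \<and>
           3 dvd o3 S' D' f' e'"
proof -
  define N where "N = {..<2 * (o3 S D f e mod 3)}"
  have N_closed: "partner ` N \<subseteq> N"
    unfolding N_def using partner_lessThan_even by auto
  have "finite (O3 S D f e)" using assms(2) unfolding O3_def by auto
  then have "card (Inl ` O3 S D f e \<union> Inr ` N) = o3 S D f e + card N"
    unfolding o3_def N_def by (subst card_Un_disjoint) (auto simp: card_image)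
  then have "o3 (Inl ` S \<union> Inr ` N) (adjoin_dom D e N) (adjoin_op f e) (Inl e) = o3 S D f e + card N"
    unfolding o3_def O3_adjoin[OF assms(1) N_closed] .
  moreover have "3 dvd o3 S D f e + card N"
    unfolding N_def card_lessThan by presburger
  moreover have "finite (Inl ` S \<union> Inr ` N)"
    unfolding N_def using assms(2) by simp
  ultimately show ?thesis
    using partial_ip_loop_adjoin[OF assms(1) N_closed] pextends_adjoin by fastforce
qed

end
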